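(* Let $X$ be a 1-reduced simplicial set, let $Q$ be a monoidal cubical set with multiplication written $(a,b)\mapsto a\cdot b$, and let $\tau=\{\tau_n:X_n\to Q_{n-1}\}_{n\ge 1}$ be a sequence of functions of degree $-1$. Let $f:{\bf \Omega}X\to Q$ be the monoidal map determined on words by $f(\bar x_1\cdots\bar x_k)=\tau(x_1)\cdots\tau(x_k)$. Then $\tau$ is a truncating twisting function if and only if $f$ is a map of cubical sets.
   Context: A simplicial set $X=\{X_n,\partial_i,s_i\}$ is 1-reduced if $X_0=X_1=\{*\}$. A cubical set $Q=\{Q_n\}_{n\ge0}$ has face operators $d_i^\epsilon:Q_n\to Q_{n-1}$ ($\epsilon=0,1$, $1\le i\le n$) and degeneracies $\eta_i:Q_n\to Q_{n+1}$ ($1\le i\le n+1$) satisfying the standard cubical identities. The product $Q\times Q'$ of cubical sets is $\bigcup_{p+q=n}Q_p\times Q'_q$ modulo $(\eta_{p+1}(a),b)\sim(a,\eta_1(b))$ with the obvious face and degeneracy operators; a monoidal cubical set is a cubical set $Q$ with an associative cubical map $Q\times Q\to Q$ having a unit $e\in Q_0$. A truncating twisting function is a sequence $\tau_n:X_n\to Q_{n-1}$, $n\ge1$, with: $\tau(x)=e$ for $x\in X_1$; $d_i^0\tau(x)=\tau(\partial_{i+1}\cdots\partial_n x)\cdot\tau(\partial_0\cdots\partial_{i-1}x)$ and $d_i^1\tau(x)=\tau(\partial_i x)$ for $1\le i\le n-1$, $x\in X_n$; and $\eta_n\tau(x)=\tau(s_n x)$ for $x\in X_n$. The monoidal cubical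 set ${\bf\Omega}X$: let $X^c$ be the graded set of formal expressions $\eta_{i_k}\cdots\eta_{i_1}(x)$, $x\in X_n$, $i_1\le\dots\le i_k$, $1\le i_j\le n+j-1$ (of degree $n+k$), containing $X$ ($k=0$). Let $\bar x$ denote the desuspension of $x\in X^c_{>0}$ (degree lowered by one). Let ${\bf\Omega}''X$ be the free graded monoid (without unit) on the $\bar x$, $x\in X^c_{>0}$, and ${\bf\Omega}'X$ its quotient by $\overline{\eta_{p+1}(x)}\cdot\bar y\sim\bar x\cdot\overline{\eta_1(y)}$ for $x\in X_{p+1}$, $y\in X$. For $x\in X_n$ set $d_i^0(\bar x)=\overline{\partial_{i+1}\cdots\partial_n x}\cdot\overline{\partial_0\cdots\partial_{i-1}x}$ and $d_i^1(\bar x)=\overline{\partial_i x}$, $1\le i\le n-1$, and $\eta_i(\bar x)=\overline{\eta_i(x)}$ (normalized). On a word $\bar x_1\cdots\bar x_k$ with $|\bar x_j|=m_j$, $m_{(q)}=m_1+\dots+m_q$, these operators act for $m_{(q-1)}<i\le m_{(q)}$ by applying the operator with index $i-m_{(q-1)}$ to the letter $\bar x_q$; the top degeneracy $\eta_n$ of a word of degree $n-1$ applies $\eta_{m_k+1}$ to the last letter; face operators are extended to degenerate elements so that the cubical identities hold. Finally ${\bf\Omega}X$ is the quotient of ${\bf\Omega}'X$ by $e\,a\sim a\,e\sim a$ where $e=\overline{s_0( * )}$, and $\eta_n(\bar x)\sim\overline{s_n(x)}$ for $x\in X_n$, $n>0$. It is a monoidal cubical set with unit $e$. *)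

theory Defs
  imports Main
begin

text \<open>A simplicial set is a graded set: a carrier together with a dimension function;
  X_n is the set of elements of the carrier of dimension n.\<close>

record 'x sset =
  sc    :: "'x set"
  sdim  :: "'x \<Rightarrow> nat"
  sface :: "nat \<Rightarrow> 'x \<Rightarrow> 'x"
  sdeg  :: "nat \<Rightarrow> 'x \<Rightarrow> 'x"

definition simplicial_set :: "'x sset \<Rightarrow> bool" where
  "simplicial_set X \<longleftrightarrow>
     (\<forall>x\<in>sc X. \<forall>i. 0 < sdim X x \<and> i \<le> sdim X x \<longrightarrow>
         sface X i x \<in> sc X \<and> sdim X (sface X i x) = sdim X x - 1) \<and>
     (\<forall>x\<in>sc X. \<forall>i. i \<le> sdim X x \<longrightarrow>
         sdeg X i x \<in> sc X \<and> sdim X (sdeg X i x) = sdim X x + 1) \<and>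
     (\<forall>x\<in>sc X. \<forall>i j. i < j \<and> j \<le> sdim X x \<and> 2 \<le> sdim X x \<longrightarrow>
         sface X i (sface X j x) = sface X (j - 1) (sface X i x)) \<and>
     (\<forall>x\<in>sc X. \<forall>i j. i \<le> j \<and> j \<le> sdim X x \<longrightarrow>
         sdeg X i (sdeg X j x) = sdeg X (Suc j) (sdeg X i x)) \<and>
     (\<forall>x\<in>sc X. \<forall>i j. i < j \<and> j \<le> sdim X x \<longrightarrow>
         sface X i (sdeg X j x) = sdeg X (j - 1) (sface X i x)) \<and>
     (\<forall>x\<in>sc X. \<forall>j. j \<le> sdim X x \<longrightarrow>
         sface X j (sdeg X j x) = x \<and> sface X (Suc j) (sdeg X j x) = x) \<and>
     (\<forall>x\<in>sc X. \<forall>i j. Suc j < i \<and> i \<le> Suc (sdim X x) \<longrightarrow>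
         sface X i (sdeg X j x) = sdeg X j (sface X (i - 1) x))"

definition one_reduced :: "'x sset \<Rightarrow> bool" where
  "one_reduced X \<longleftrightarrow>
     (\<exists>a. {x\<in>sc X. sdim X x = 0} = {a}) \<and> (\<exists>b. {x\<in>sc X. sdim X x = 1} = {b})"

definition base_pt :: "'x sset \<Rightarrow> 'x" where
  "base_pt X = (THE a. a \<in> sc X \<and> sdim X a = 0)"

text \<open>back_faces X i x = \<partial>_{i+1} ... \<partial>_n x   (x in X_n; \<partial>_n applied first)\<close>
definition back_faces :: "'x sset \<Rightarrow> nat \<Rightarrow> 'x \<Rightarrow> 'x" where
  "back_faces X i x = foldr (sface X) [Suc i..<Suc (sdim X x)] x"

text \<open>front_faces X i x = \<partial>_0 ... \<partial>_{i-1} x   (\<partial>_{i-1} applied first)\<close>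
definition front_faces :: "'x sset \<Rightarrow> nat \<Rightarrow> 'x \<Rightarrow> 'x" where
  "front_faces X i x = foldr (sface X) [0..<i] x"

text \<open>Graded carrier; faces d_i^eps (eps = False for 0, True for 1), 1 <= i <= n,
  and degeneracies eta_i, 1 <= i <= n+1, on Q_n.\<close>

record 'q cset =
  cc    :: "'q set"
  cdim  :: "'q \<Rightarrow> nat"
  cface :: "nat \<Rightarrow> bool \<Rightarrow> 'q \<Rightarrow> 'q"
  cdeg  :: "nat \<Rightarrow> 'q \<Rightarrow> 'q"

record 'q mcset = "'q cset" +
  cmult :: "'q \<Rightarrow> 'q \<Rightarrow> 'q"
  cunit :: "'q"

definition cubical_set :: "('q, 'z) cset_scheme \<Rightarrow> bool" where
  "cubical_set Q \<longleftrightarrow>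
     (\<forall>a\<in>cc Q. \<forall>i \<epsilon>. 1 \<le> i \<and> i \<le> cdim Q a \<longrightarrow>
         cface Q i \<epsilon> a \<in> cc Q \<and> cdim Q (cface Q i \<epsilon> a) = cdim Q a - 1) \<and>
     (\<forall>a\<in>cc Q. \<forall>i. 1 \<le> i \<and> i \<le> Suc (cdim Q a) \<longrightarrow>
         cdeg Q i a \<in> cc Q \<and> cdim Q (cdeg Q i a) = Suc (cdim Q a)) \<and>
     (\<forall>a\<in>cc Q. \<forall>i j \<epsilon> \<omega>. 1 \<le> i \<and> i < j \<and> j \<le> cdim Q a \<longrightarrow>
         cface Q i \<epsilon> (cface Q j \<omega> a) = cface Q (j - 1) \<omega> (cface Q i \<epsilon> a)) \<and>
     (\<forall>a\<in>cc Q. \<forall>i j. 1 \<le> i \<and> i \<le> j \<and> j \<le> Suc (cdim Q a) \<longrightarrow>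
         cdeg Q i (cdeg Q j a) = cdeg Q (Suc j) (cdeg Q i a)) \<and>
     (\<forall>a\<in>cc Q. \<forall>i j \<epsilon>. 1 \<le> i \<and> i < j \<and> j \<le> Suc (cdim Q a) \<longrightarrow>
         cface Q i \<epsilon> (cdeg Q j a) = cdeg Q (j - 1) (cface Q i \<epsilon> a)) \<and>
     (\<forall>a\<in>cc Q. \<forall>j \<epsilon>. 1 \<le> j \<and> j \<le> Suc (cdim Q a) \<longrightarrow>
         cface Q j \<epsilon> (cdeg Q j a) = a) \<and>
     (\<forall>a\<in>cc Q. \<forall>i j \<epsilon>. 1 \<le> j \<and> j < i \<and> i \<le> Suc (cdim Q a) \<longrightarrow>
         cface Q i \<epsilon> (cdeg Q j a) = cdeg Q j (cface Q (i - 1) \<epsilon> a))"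

text \<open>Monoidal cubical set: an associative unital multiplication Q x Q -> Q which is a
  cubical map from the product cubical set (faces/degeneracies of (a,b) with a in Q_p act on a
  for indices <= p (resp. <= p+1) and on b with shifted index otherwise; the identification
  (eta_{p+1} a, b) ~ (a, eta_1 b) is then respected automatically).\<close>

definition monoidal_cubical_set :: "'q mcset \<Rightarrow> bool" where
  "monoidal_cubical_set Q \<longleftrightarrow> cubical_set Q \<and>
     cunit Q \<in> cc Q \<and> cdim Q (cunit Q) = 0 \<and>
     (\<forall>a\<in>cc Q. \<forall>b\<in>cc Q. cmult Q a b \<in> cc Q \<and> cdim Q (cmult Q a b) = cdim Q a + cdim Q b) \<and>
     (\<forall>a\<in>cc Q. \<forall>b\<in>cc Q. \<forall>c\<in>cc Q. cmult Q (cmult Q a b) c = cmult Q a (cmult Q b c)) \<and>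
     (\<forall>a\<in>cc Q. cmult Q (cunit Q) a = a \<and> cmult Q a (cunit Q) = a) \<and>
     (\<forall>a\<in>cc Q. \<forall>b\<in>cc Q. \<forall>i \<epsilon>. 1 \<le> i \<and> i \<le> cdim Q a \<longrightarrow>
         cmult Q (cface Q i \<epsilon> a) b = cface Q i \<epsilon> (cmult Q a b)) \<and>
     (\<forall>a\<in>cc Q. \<forall>b\<in>cc Q. \<forall>i \<epsilon>. 1 \<le> i \<and> i \<le> cdim Q b \<longrightarrow>
         cmult Q a (cface Q i \<epsilon> b) = cface Q (cdim Q a + i) \<epsilon> (cmult Q a b)) \<and>
     (\<forall>a\<in>cc Q. \<forall>b\<in>cc Q. \<forall>i. 1 \<le> i \<and> i \<le> Suc (cdim Q a) \<longrightarrow>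
         cmult Q (cdeg Q i a) b = cdeg Q i (cmult Q a b)) \<and>
     (\<forall>a\<in>cc Q. \<forall>b\<in>cc Q. \<forall>i. 1 \<le> i \<and> i \<le> Suc (cdim Q b) \<longrightarrow>
         cmult Q a (cdeg Q i b) = cdeg Q (cdim Q a + i) (cmult Q a b))"

definition truncating_twisting ::
  "'x sset \<Rightarrow> 'q mcset \<Rightarrow> ('x \<Rightarrow> 'q) \<Rightarrow> bool" where
  "truncating_twisting X Q \<tau> \<longleftrightarrow>
     (\<forall>x\<in>sc X. sdim X x = 1 \<longrightarrow> \<tau> x = cunit Q) \<and>
     (\<forall>x\<in>sc X. \<forall>i. 1 \<le> i \<and> i \<le> sdim X x - 1 \<longrightarrow>
         cface Q i False (\<tau> x) = cmult Q (\<tau> (back_faces X i x)) (\<tau> (front_faces X i x))) \<and>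
     (\<forall>x\<in>sc X. \<forall>i. 1 \<le> i \<and> i \<le> sdim X x - 1 \<longrightarrow>
         cface Q i True (\<tau> x) = \<tau> (sface X i x)) \<and>
     (\<forall>x\<in>sc X. 1 \<le> sdim X x \<longrightarrow> cdeg Q (sdim X x) (\<tau> x) = \<tau> (sdeg X (sdim X x) x))"

section \<open>The monoidal cubical set Omega X, via representatives\<close>

text \<open>A letter (x, is) stands for the desuspension of the formal degenerate expression
  eta_{i_k} ... eta_{i_1}(x), where is = [i_k, ..., i_1] (outermost degeneracy first).
  A word is a nonempty list of letters (element of the free monoid Omega''X).\<close>

type_synonym 'x letter = "'x \<times> nat list"
type_synonym 'x word = "'x letter list"

text \<open>Apply the formal degeneracy eta_j to a normalized index list and renormalize using
  eta_i eta_j = eta_{j+1} eta_i (i <= j).\<close>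
fun ins_deg :: "nat \<Rightarrow> nat list \<Rightarrow> nat list" where
  "ins_deg j [] = [j]"
| "ins_deg j (i # is) = (if j \<le> i then Suc i # ins_deg j is else j # i # is)"

text \<open>Normalized formal degeneracy lists applicable to an element of X_n (the set X^c):
  generated from the empty list by admissible normalized degeneracies.\<close>
inductive normal_degs :: "nat \<Rightarrow> nat list \<Rightarrow> bool" for n :: nat where
  nd_nil: "normal_degs n []"
| nd_ins: "normal_degs n is \<Longrightarrow> 1 \<le> j \<Longrightarrow> j \<le> n + length is \<Longrightarrow> normal_degs n (ins_deg j is)"

definition valid_letter :: "'x sset \<Rightarrow> 'x letter \<Rightarrow> bool" where
  "valid_letter X l \<longleftrightarrow> fst l \<in> sc X \<and> 1 \<le> sdim X (fst l) \<and> normal_degs (sdim X (fst l)) (snd l)"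

definition valid_word :: "'x sset \<Rightarrow> 'x word \<Rightarrow> bool" where
  "valid_word X w \<longleftrightarrow> w \<noteq> [] \<and> (\<forall>l\<in>set w. valid_letter X l)"

definition ldim :: "'x sset \<Rightarrow> 'x letter \<Rightarrow> nat" where
  "ldim X l = sdim X (fst l) - 1 + length (snd l)"

definition wdim :: "'x sset \<Rightarrow> 'x word \<Rightarrow> nat" where
  "wdim X w = sum_list (map (ldim X) w)"

text \<open>Degeneracy eta_j on a word: it acts on the letter q with m_(q-1) < j <= m_(q)
  (index j - m_(q-1)); the top degeneracy acts on the last letter.\<close>
fun eta_word :: "'x sset \<Rightarrow> nat \<Rightarrow> 'x word \<Rightarrow> 'x word" where
  "eta_word X j [] = []"
| "eta_word X j [l] = [(fst l, ins_deg j (snd l))]"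
| "eta_word X j (l # l' # ls) =
     (if j \<le> ldim X l then (fst l, ins_deg j (snd l)) # l' # ls
      else l # eta_word X (j - ldim X l) (l' # ls))"

text \<open>Faces of a letter: on a nondegenerate letter by the defining formulas, on degenerate
  letters extended via the cubical identities.\<close>
fun face_letter :: "'x sset \<Rightarrow> nat \<Rightarrow> bool \<Rightarrow> 'x \<Rightarrow> nat list \<Rightarrow> 'x word" where
  "face_letter X i \<epsilon> x [] =
     (if \<epsilon> then [(sface X i x, [])]
      else [(back_faces X i x, []), (front_faces X i x, [])])"
| "face_letter X i \<epsilon> x (j # is) =
     (if i < j then eta_word X (j - 1) (face_letter X i \<epsilon> x is)
      else if i = j then [(x, is)]
      else eta_word X j (face_letter X (i - 1) \<epsilon> x is))"

fun face_word :: "'x sset \<Rightarrow> nat \<Rightarrow> bool \<Rightarrow> 'x word \<Rightarrow> 'x word" where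
  "face_word X i \<epsilon> [] = []"
| "face_word X i \<epsilon> (l # ls) =
     (if i \<le> ldim X l then face_letter X i \<epsilon> (fst l) (snd l) @ ls
      else l # face_word X (i - ldim X l) \<epsilon> ls)"

definition omega_unit :: "'x sset \<Rightarrow> 'x word" where
  "omega_unit X = [(sdeg X 0 (base_pt X), [])]"

text \<open>The equivalence relation on words defining Omega X = Omega''X / ~ : generated by the
  relations of Omega'X and Omega X, as a congruence for the multiplication (concatenation)
  and for the cubical operators.\<close>
inductive omega_rel :: "'x sset \<Rightarrow> 'x word \<Rightarrow> 'x word \<Rightarrow> bool" for X :: "'x sset" where
  om_refl: "valid_word X w \<Longrightarrow> omega_rel X w w"
| om_sym: "omega_rel X w v \<Longrightarrow> omega_rel X v w"
| om_trans: "omega_rel X u v \<Longrightarrow> omega_rel X v w \<Longrightarrow> omega_rel X u w"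
| om_shift: "x \<in> sc X \<Longrightarrow> 1 \<le> sdim X x \<Longrightarrow> y \<in> sc X \<Longrightarrow> 1 \<le> sdim X y \<Longrightarrow>
     omega_rel X [(x, [sdim X x]), (y, [])] [(x, []), (y, [1])]"
| om_unit_l: "valid_word X w \<Longrightarrow> omega_rel X (omega_unit X @ w) w"
| om_unit_r: "valid_word X w \<Longrightarrow> omega_rel X (w @ omega_unit X) w"
| om_top_deg: "x \<in> sc X \<Longrightarrow> 1 \<le> sdim X x \<Longrightarrow>
     omega_rel X [(x, [sdim X x])] [(sdeg X (sdim X x) x, [])]"
| om_mult: "omega_rel X w v \<Longrightarrow> \<forall>l\<in>set u. valid_letter X l \<Longrightarrow> \<forall>l\<in>set u'. valid_letter X l \<Longrightarrow>
     omega_rel X (u @ w @ u') (u @ v @ u')"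
| om_face: "omega_rel X w v \<Longrightarrow> 1 \<le> i \<Longrightarrow> i \<le> wdim X w \<Longrightarrow>
     omega_rel X (face_word X i \<epsilon> w) (face_word X i \<epsilon> v)"
| om_deg: "omega_rel X w v \<Longrightarrow> 1 \<le> j \<Longrightarrow> j \<le> Suc (wdim X w) \<Longrightarrow>
     omega_rel X (eta_word X j w) (eta_word X j v)"

definition f_letter :: "'q mcset \<Rightarrow> ('x \<Rightarrow> 'q) \<Rightarrow> 'x letter \<Rightarrow> 'q" where
  "f_letter Q \<tau> l = foldr (cdeg Q) (snd l) (\<tau> (fst l))"

fun f_word :: "'q mcset \<Rightarrow> ('x \<Rightarrow> 'q) \<Rightarrow> 'x word \<Rightarrow> 'q" where
  "f_word Q \<tau> [] = cunit Q"
| "f_word Q \<tau> [l] = f_letter Q \<tau> l"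
| "f_word Q \<tau> (l # l' # ls) = cmult Q (f_letter Q \<tau> l) (f_word Q \<tau> (l' # ls))"

text \<open>f is a (monoidal) map of cubical sets Omega X -> Q: it is well defined on the quotient
  Omega X, preserves the unit, and commutes with all faces and degeneracies (which on Omega X
  are induced from representatives).\<close>
definition omega_map_is_cubical :: "'x sset \<Rightarrow> 'q mcset \<Rightarrow> ('x \<Rightarrow> 'q) \<Rightarrow> bool" where
  "omega_map_is_cubical X Q \<tau> \<longleftrightarrow>
     (\<forall>w v. omega_rel X w v \<longrightarrow> f_word Q \<tau> w = f_word Q \<tau> v) \<and>
     f_word Q \<tau> (omega_unit X) = cunit Q \<and>
     (\<forall>w. valid_word X w \<longrightarrow>
        (\<forall>i \<epsilon>. 1 \<le> i \<and> i \<le> wdim X w \<longrightarrow>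
           f_word Q \<tau> (face_word X i \<epsilon> w) = cface Q i \<epsilon> (f_word Q \<tau> w)) \<and>
        (\<forall>j. 1 \<le> j \<and> j \<le> Suc (wdim X w) \<longrightarrow>
           f_word Q \<tau> (eta_word X j w) = cdeg Q j (f_word Q \<tau> w)))"

end

theory Submission
  imports Defs
begin

(* The map f is multiplicative, and by the monoidal axioms faces and degeneracies of Q act on a
   product factor by factor, exactly as those of Omega X act on a word letter by letter.  So f
   commutes with them as soon as it does on single letters.  On a degenerate letter the faces
   of Omega X are defined by the cubical identities, which also hold in Q, so everything reduces
   to nondegenerate letters bar x, where "f commutes with d_i^0, d_i^1 and eta_n" is literally
   the list of twisting equations for tau(x).  The defining relations of Omega X are respected
   because e is sent to the unit (tau = e on X_1), because eta_{p+1} a . b = a . eta_1 b holds in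
   Q, and because eta_n tau(x) = tau(s_n x).  Conversely, the conditions on one-letter words
   give back the twisting equations, and X_1 = {s_0 *} with f(e) = e gives tau = e on X_1. *)

(* normal_degs is generated by ins_deg; this weaker condition can be checked head by head. *)
fun admissible_degs :: "nat \<Rightarrow> nat list \<Rightarrow> bool" where
  "admissible_degs n [] = True"
| "admissible_degs n (i # ds) = (1 \<le> i \<and> i \<le> n + length ds \<and> admissible_degs n ds)"

lemma length_ins_deg [simp]: "length (ins_deg j ds) = Suc (length ds)"
  by (induction ds) auto

lemma admissible_degs_ins_deg:
  "admissible_degs n ds \<Longrightarrow> 1 \<le> j \<Longrightarrow> j \<le> n + length ds \<Longrightarrow> admissible_degs n (ins_deg j ds)"
  by (induction ds) auto

lemma normal_degs_imp_admissible_degs: "normal_degs n ds \<Longrightarrow> admissible_degs n ds"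
  by (induction rule: normal_degs.induct) (auto simp: admissible_degs_ins_deg)

definition admissible_letter :: "'x sset \<Rightarrow> 'x letter \<Rightarrow> bool" where
  "admissible_letter X l \<longleftrightarrow>
     fst l \<in> sc X \<and> 1 \<le> sdim X (fst l) \<and> admissible_degs (sdim X (fst l)) (snd l)"

definition admissible_word :: "'x sset \<Rightarrow> 'x word \<Rightarrow> bool" where
  "admissible_word X w \<longleftrightarrow> w \<noteq> [] \<and> list_all (admissible_letter X) w"

lemma admissible_word_singleton [simp]: "admissible_word X [l] \<longleftrightarrow> admissible_letter X l"
  by (simp add: admissible_word_def)

lemma valid_letter_imp_admissible: "valid_letter X l \<Longrightarrow> admissible_letter X l"
  by (simp add: valid_letter_def admissible_letter_def normal_degs_imp_admissible_degs)

lemma valid_word_imp_admissible: "valid_word X w \<Longrightarrow> admissible_word X w"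
  by (auto simp: valid_word_def admissible_word_def list_all_iff valid_letter_imp_admissible)

lemma admissible_letter_Cons:
  "admissible_letter X (x, i # ds) \<longleftrightarrow>
     admissible_letter X (x, ds) \<and> 1 \<le> i \<and> i \<le> sdim X x + length ds"
  by (auto simp: admissible_letter_def)

lemma ldim_Cons [simp]: "ldim X (x, i # ds) = Suc (ldim X (x, ds))"
  by (simp add: ldim_def)

lemma ldim_ins_deg [simp]: "ldim X (x, ins_deg j ds) = Suc (ldim X (x, ds))"
  by (simp add: ldim_def)

lemma admissible_letter_ins_deg:
  "admissible_letter X (x, ds) \<Longrightarrow> 1 \<le> j \<Longrightarrow> j \<le> Suc (ldim X (x, ds)) \<Longrightarrow>
   admissible_letter X (x, ins_deg j ds)"
  by (auto simp: admissible_letter_def ldim_def admissible_degs_ins_deg)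

lemma wdim_Nil [simp]: "wdim X [] = 0"
  and wdim_Cons [simp]: "wdim X (l # w) = ldim X l + wdim X w"
  and wdim_append [simp]: "wdim X (u @ w) = wdim X u + wdim X w"
  by (simp_all add: wdim_def)

lemma eta_word_eq_Nil_iff [simp]: "eta_word X j w = [] \<longleftrightarrow> w = []"
  by (induction X j w rule: eta_word.induct) auto

lemma wdim_eta_word: "w \<noteq> [] \<Longrightarrow> wdim X (eta_word X j w) = Suc (wdim X w)"
  by (induction X j w rule: eta_word.induct) (auto simp: eq_commute[of "[]"])

lemma eta_word_admissible:
  "admissible_word X w \<Longrightarrow> 1 \<le> j \<Longrightarrow> j \<le> Suc (wdim X w) \<Longrightarrow>
   admissible_word X (eta_word X j w)"
proof (induction X j w rule: eta_word.induct)
  case (2 X j l)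
  then show ?case
    by (cases l) (auto simp: admissible_word_def admissible_letter_ins_deg)
next
  case (3 X j l l' ls)
  then show ?case
    by (cases l) (auto simp: admissible_word_def admissible_letter_ins_deg)
qed simp

lemma face_letter_ne_Nil: "face_letter X i \<epsilon> x ds \<noteq> []"
  by (induction ds arbitrary: i) auto

lemma f_letter_Nil [simp]: "f_letter Q \<tau> (x, []) = \<tau> x"
  and f_letter_Cons [simp]: "f_letter Q \<tau> (x, i # ds) = cdeg Q i (f_letter Q \<tau> (x, ds))"
  by (simp_all add: f_letter_def)

locale simplicial =
  fixes X :: "'x sset"
  assumes simplicial: "simplicial_set X"
begin

lemma sface_closed:
  assumes "x \<in> sc X" "0 < sdim X x" "i \<le> sdim X x"
  shows "sface X i x \<in> sc X" "sdim X (sface X i x) = sdim X x - 1"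
  using simplicial assms unfolding simplicial_set_def by simp_all

lemma sdeg_closed:
  assumes "x \<in> sc X" "i \<le> sdim X x"
  shows "sdeg X i x \<in> sc X" "sdim X (sdeg X i x) = Suc (sdim X x)"
  using simplicial assms unfolding simplicial_set_def by simp_all

lemma front_faces_closed:
  assumes "x \<in> sc X" "k \<le> sdim X x"
  shows "front_faces X k x \<in> sc X \<and> sdim X (front_faces X k x) = sdim X x - k"
  using assms
proof (induction k arbitrary: x)
  case 0
  then show ?case by (simp add: front_faces_def)
next
  case (Suc k)
  have "front_faces X (Suc k) x = front_faces X k (sface X k x)"
    by (simp add: front_faces_def)
  then show ?case
    using Suc.IH[of "sface X k x"] sface_closed[of x k] Suc.prems by simp
qed

lemma back_faces_closed:
  assumes "x \<in> sc X" "i \<le> sdim X x"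
  shows "back_faces X i x \<in> sc X \<and> sdim X (back_faces X i x) = i"
proof -
  have "foldr (sface X) [Suc i..<Suc (i + k)] y \<in> sc X \<and>
        sdim X (foldr (sface X) [Suc i..<Suc (i + k)] y) = i"
    if "y \<in> sc X" "sdim X y = i + k" for y k
    using that
  proof (induction k arbitrary: y)
    case (Suc k)
    then show ?case
      using Suc.IH[of "sface X (Suc (i + k)) y"] sface_closed[of y "Suc (i + k)"] by simp
  qed simp
  from this[of x "sdim X x - i"] show ?thesis
    using assms by (simp add: back_faces_def)
qed

lemma wdim_face_letter:
  assumes "admissible_letter X (x, ds)" "1 \<le> i" "i \<le> ldim X (x, ds)"
  shows "wdim X (face_letter X i \<epsilon> x ds) = ldim X (x, ds) - 1"
  using assms
proof (induction ds arbitrary: i)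
  case Nil
  then have x: "x \<in> sc X" "i < sdim X x" by (auto simp: admissible_letter_def ldim_def)
  show ?case
    using x back_faces_closed[of x i] front_faces_closed[of x i] sface_closed[of x i] Nil.prems(2)
    by (auto simp: ldim_def)
next
  case (Cons j ds)
  then show ?case
    by (auto simp: admissible_letter_Cons wdim_eta_word face_letter_ne_Nil ldim_def)
qed

lemma face_letter_admissible:
  assumes "admissible_letter X (x, ds)" "1 \<le> i" "i \<le> ldim X (x, ds)"
  shows "admissible_word X (face_letter X i \<epsilon> x ds)"
  using assms
proof (induction ds arbitrary: i)
  case Nil
  then have x: "x \<in> sc X" "i < sdim X x" by (auto simp: admissible_letter_def ldim_def)
  show ?case
    using x back_faces_closed[of x i] front_faces_closed[of x i] sface_closed[of x i] Nil.prems(2)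
    by (auto simp: admissible_word_def admissible_letter_def)
next
  case (Cons j ds)
  then show ?case
    by (auto simp: admissible_letter_Cons wdim_face_letter ldim_def intro!: eta_word_admissible)
qed

lemma face_word_admissible:
  assumes "admissible_word X w" "1 \<le> i" "i \<le> wdim X w"
  shows "admissible_word X (face_word X i \<epsilon> w)"
  using assms
proof (induction w arbitrary: i)
  case (Cons l w)
  obtain x ds where l: "l = (x, ds)" by fastforce
  show ?case
  proof (cases "i \<le> ldim X l")
    case True
    then have "admissible_word X (face_letter X i \<epsilon> x ds)"
      using Cons.prems l by (intro face_letter_admissible) (auto simp: admissible_word_def)
    then show ?thesis
      using True Cons.prems l by (auto simp: admissible_word_def)
  next
    case False
    then have "w \<noteq> []" using Cons.prems(3) by auto
    then show ?thesis
      using False Cons by (auto simp: admissible_word_def)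
  qed
qed (simp add: admissible_word_def)

context
  assumes one_reduced: "one_reduced X"
begin

lemma base_pt_closed: "base_pt X \<in> sc X" "sdim X (base_pt X) = 0"
proof -
  obtain a where a: "{x \<in> sc X. sdim X x = 0} = {a}"
    using one_reduced unfolding one_reduced_def by blast
  then have "base_pt X = a"
    unfolding base_pt_def by (intro the_equality) auto
  with a show "base_pt X \<in> sc X" "sdim X (base_pt X) = 0" by auto
qed

lemma one_simplex_eq_sdeg_base_pt:
  assumes "x \<in> sc X" "sdim X x = 1"
  shows "x = sdeg X 0 (base_pt X)"
proof -
  obtain b where b: "{x \<in> sc X. sdim X x = 1} = {b}"
    using one_reduced unfolding one_reduced_def by blast
  have "sdeg X 0 (base_pt X) \<in> sc X" "sdim X (sdeg X 0 (base_pt X)) = 1"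
    using sdeg_closed[of "base_pt X" 0] base_pt_closed by simp_all
  then have "sdeg X 0 (base_pt X) = b" using b by blast
  moreover have "x = b" using b assms by blast
  ultimately show ?thesis by simp
qed

lemma omega_unit_admissible: "admissible_word X (omega_unit X)"
  using sdeg_closed[of "base_pt X" 0] base_pt_closed
  by (simp add: omega_unit_def admissible_word_def admissible_letter_def)

end

end

locale cubical =
  fixes Q :: "('q, 'z) cset_scheme"
  assumes cubical: "cubical_set Q"
begin

lemma cdeg_closed:
  assumes "a \<in> cc Q" "1 \<le> i" "i \<le> Suc (cdim Q a)"
  shows "cdeg Q i a \<in> cc Q" "cdim Q (cdeg Q i a) = Suc (cdim Q a)"
  using cubical assms unfolding cubical_set_def by simp_all

lemma cdeg_cdeg:
  assumes "a \<in> cc Q" "1 \<le> i" "i \<le> j" "j \<le> Suc (cdim Q a)"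
  shows "cdeg Q i (cdeg Q j a) = cdeg Q (Suc j) (cdeg Q i a)"
  using cubical assms unfolding cubical_set_def by simp

lemma cface_cdeg_less:
  assumes "a \<in> cc Q" "1 \<le> i" "i < j" "j \<le> Suc (cdim Q a)"
  shows "cface Q i \<epsilon> (cdeg Q j a) = cdeg Q (j - 1) (cface Q i \<epsilon> a)"
  using cubical assms unfolding cubical_set_def by simp

lemma cface_cdeg_same:
  assumes "a \<in> cc Q" "1 \<le> j" "j \<le> Suc (cdim Q a)"
  shows "cface Q j \<epsilon> (cdeg Q j a) = a"
  using cubical assms unfolding cubical_set_def by simp

lemma cface_cdeg_greater:
  assumes "a \<in> cc Q" "1 \<le> j" "j < i" "i \<le> Suc (cdim Q a)"
  shows "cface Q i \<epsilon> (cdeg Q j a) = cdeg Q j (cface Q (i - 1) \<epsilon> a)"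
  using cubical assms unfolding cubical_set_def by simp

end

locale monoidal_cubical =
  fixes Q :: "'q mcset"
  assumes monoidal: "monoidal_cubical_set Q"
begin

sublocale cubical Q
  using monoidal by unfold_locales (simp add: monoidal_cubical_set_def)

lemma cunit_closed: "cunit Q \<in> cc Q" "cdim Q (cunit Q) = 0"
  using monoidal unfolding monoidal_cubical_set_def by simp_all

lemma cmult_closed:
  assumes "a \<in> cc Q" "b \<in> cc Q"
  shows "cmult Q a b \<in> cc Q" "cdim Q (cmult Q a b) = cdim Q a + cdim Q b"
  using monoidal assms unfolding monoidal_cubical_set_def by simp_all

lemma cmult_assoc:
  "a \<in> cc Q \<Longrightarrow> b \<in> cc Q \<Longrightarrow> c \<in> cc Q \<Longrightarrow> cmult Q (cmult Q a b) c = cmult Q a (cmult Q b c)"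
  using monoidal unfolding monoidal_cubical_set_def by simp

lemma cmult_unit_left: "a \<in> cc Q \<Longrightarrow> cmult Q (cunit Q) a = a"
  and cmult_unit_right: "a \<in> cc Q \<Longrightarrow> cmult Q a (cunit Q) = a"
  using monoidal unfolding monoidal_cubical_set_def by simp_all

lemma cface_cmult_left:
  assumes "a \<in> cc Q" "b \<in> cc Q" "1 \<le> i" "i \<le> cdim Q a"
  shows "cface Q i \<epsilon> (cmult Q a b) = cmult Q (cface Q i \<epsilon> a) b"
  using monoidal assms unfolding monoidal_cubical_set_def by simp

lemma cface_cmult_right:
  assumes "a \<in> cc Q" "b \<in> cc Q" "1 \<le> i" "i \<le> cdim Q b"
  shows "cface Q (cdim Q a + i) \<epsilon> (cmult Q a b) = cmult Q a (cface Q i \<epsilon> b)"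
  using monoidal assms unfolding monoidal_cubical_set_def by simp

lemma cdeg_cmult_left:
  assumes "a \<in> cc Q" "b \<in> cc Q" "1 \<le> i" "i \<le> Suc (cdim Q a)"
  shows "cdeg Q i (cmult Q a b) = cmult Q (cdeg Q i a) b"
  using monoidal assms unfolding monoidal_cubical_set_def by simp

lemma cdeg_cmult_right:
  assumes "a \<in> cc Q" "b \<in> cc Q" "1 \<le> i" "i \<le> Suc (cdim Q b)"
  shows "cdeg Q (cdim Q a + i) (cmult Q a b) = cmult Q a (cdeg Q i b)"
  using monoidal assms unfolding monoidal_cubical_set_def by simp

end

locale twisting_data = simplicial X + monoidal_cubical Q
  for X :: "'x sset" and Q :: "'q mcset" +
  fixes \<tau> :: "'x \<Rightarrow> 'q"
  assumes tau_closed: "x \<in> sc X \<Longrightarrow> 1 \<le> sdim X x \<Longrightarrow> \<tau> x \<in> cc Q"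
    and cdim_tau: "x \<in> sc X \<Longrightarrow> 1 \<le> sdim X x \<Longrightarrow> cdim Q (\<tau> x) = sdim X x - 1"
begin

lemma f_letter_closed:
  assumes "admissible_letter X l"
  shows "f_letter Q \<tau> l \<in> cc Q \<and> cdim Q (f_letter Q \<tau> l) = ldim X l"
proof -
  have "f_letter Q \<tau> (x, ds) \<in> cc Q \<and> cdim Q (f_letter Q \<tau> (x, ds)) = ldim X (x, ds)"
    if "admissible_letter X (x, ds)" for x ds
    using that
  proof (induction ds)
    case Nil
    then show ?case
      using tau_closed cdim_tau by (simp add: admissible_letter_def ldim_def)
  next
    case (Cons j ds)
    then show ?case
      by (auto simp: admissible_letter_Cons ldim_def cdeg_closed)
  qed
  with assms show ?thesis
    by (metis prod.collapse)
qed

lemma f_letter_ins_deg: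
  assumes "admissible_letter X (x, ds)" "1 \<le> j" "j \<le> Suc (ldim X (x, ds))"
  shows "f_letter Q \<tau> (x, ins_deg j ds) = cdeg Q j (f_letter Q \<tau> (x, ds))"
  using assms
proof (induction ds)
  case (Cons i ds)
  then show ?case
    using cdeg_cdeg[of "f_letter Q \<tau> (x, ds)" j i] f_letter_closed[of "(x, ds)"]
    by (auto simp: admissible_letter_Cons ldim_def)
qed simp

lemma f_word_Cons:
  assumes "admissible_letter X l"
  shows "f_word Q \<tau> (l # w) = cmult Q (f_letter Q \<tau> l) (f_word Q \<tau> w)"
  using assms f_letter_closed[of l] cmult_unit_right by (cases w) simp_all

lemma f_word_closed:
  assumes "list_all (admissible_letter X) w"
  shows "f_word Q \<tau> w \<in> cc Q \<and> cdim Q (f_word Q \<tau> w) = wdim X w"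
  using assms
  by (induction w) (auto simp: f_word_Cons cunit_closed f_letter_closed cmult_closed)

lemma f_word_append:
  assumes "list_all (admissible_letter X) u" "list_all (admissible_letter X) w"
  shows "f_word Q \<tau> (u @ w) = cmult Q (f_word Q \<tau> u) (f_word Q \<tau> w)"
  using assms
proof (induction u)
  case Nil
  then show ?case using f_word_closed cmult_unit_left by simp
next
  case (Cons l u)
  then show ?case
    using f_letter_closed[of l] f_word_closed[of u] f_word_closed[of w]
    by (simp add: f_word_Cons cmult_assoc)
qed

lemma f_word_eta_word:
  assumes "admissible_word X w" "1 \<le> j" "j \<le> Suc (wdim X w)"
  shows "f_word Q \<tau> (eta_word X j w) = cdeg Q j (f_word Q \<tau> w)"
  using assms
proof (induction w arbitrary: j)
  case (Cons l ls)
  obtain x ds where l: "l = (x, ds)" by fastforce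
  have adm: "admissible_letter X l" "list_all (admissible_letter X) ls"
    using Cons.prems(1) by (simp_all add: admissible_word_def)
  note closed = f_letter_closed[OF adm(1)] f_word_closed[OF adm(2)]
  show ?case
  proof (cases "ls = []")
    case True
    then show ?thesis
      using Cons.prems adm l f_letter_ins_deg by simp
  next
    case False
    then obtain l' ls' where ls: "ls = l' # ls'" by (meson neq_Nil_conv)
    show ?thesis
    proof (cases "j \<le> ldim X l")
      case True
      then show ?thesis
        using Cons.prems adm l ls closed f_letter_ins_deg
        by (simp add: f_word_Cons admissible_letter_ins_deg cdeg_cmult_left)
    next
      case False
      have "f_word Q \<tau> (eta_word X j (l # ls)) =
          cmult Q (f_letter Q \<tau> l) (f_word Q \<tau> (eta_word X (j - ldim X l) ls))"
        using False ls adm by (simp add: f_word_Cons)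
      also have "\<dots> = cmult Q (f_letter Q \<tau> l) (cdeg Q (j - ldim X l) (f_word Q \<tau> ls))"
        using Cons False ls adm by (auto simp: admissible_word_def)
      also have "\<dots> = cdeg Q j (cmult Q (f_letter Q \<tau> l) (f_word Q \<tau> ls))"
        using cdeg_cmult_right[of "f_letter Q \<tau> l" "f_word Q \<tau> ls" "j - ldim X l"]
          Cons.prems False closed by simp
      finally show ?thesis
        using adm by (simp add: f_word_Cons)
    qed
  qed
qed (simp add: admissible_word_def)

lemma f_word_face_letter:
  assumes tw: "truncating_twisting X Q \<tau>"
    and "admissible_letter X (x, ds)" "1 \<le> i" "i \<le> ldim X (x, ds)"
  shows "f_word Q \<tau> (face_letter X i \<epsilon> x ds) = cface Q i \<epsilon> (f_letter Q \<tau> (x, ds))"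
  using assms(2-)
proof (induction ds arbitrary: i)
  case Nil
  then have "x \<in> sc X" "i \<le> sdim X x - 1"
    by (simp_all add: admissible_letter_def ldim_def)
  with tw Nil.prems(2) show ?case
    unfolding truncating_twisting_def by (cases \<epsilon>) simp_all
next
  case (Cons j ds)
  define a where "a = f_letter Q \<tau> (x, ds)"
  have adm: "admissible_letter X (x, ds)" and j: "1 \<le> j" "j \<le> Suc (ldim X (x, ds))"
    using Cons.prems(1) by (auto simp: admissible_letter_Cons admissible_letter_def ldim_def)
  have a: "a \<in> cc Q" "cdim Q a = ldim X (x, ds)"
    using f_letter_closed[OF adm] by (simp_all add: a_def)
  consider "i < j" | "i = j" | "j < i" by linarith
  then show ?case
  proof cases
    case 1
    have "f_word Q \<tau> (face_letter X i \<epsilon> x (j # ds)) =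
        cdeg Q (j - 1) (f_word Q \<tau> (face_letter X i \<epsilon> x ds))"
      using 1 Cons.prems j adm
      by (simp add: f_word_eta_word face_letter_admissible wdim_face_letter)
    also have "\<dots> = cdeg Q (j - 1) (cface Q i \<epsilon> a)"
      using 1 Cons j adm by (simp add: a_def)
    also have "\<dots> = cface Q i \<epsilon> (f_letter Q \<tau> (x, j # ds))"
      using 1 Cons.prems j a cface_cdeg_less by (simp add: a_def)
    finally show ?thesis .
  next
    case 2
    then show ?thesis
      using j a cface_cdeg_same by (simp add: a_def)
  next
    case 3
    have "f_word Q \<tau> (face_letter X i \<epsilon> x (j # ds)) =
        cdeg Q j (f_word Q \<tau> (face_letter X (i - 1) \<epsilon> x ds))"
      using 3 Cons.prems j adm
      by (simp add: f_word_eta_word face_letter_admissible wdim_face_letter)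
    also have "\<dots> = cdeg Q j (cface Q (i - 1) \<epsilon> a)"
      using 3 Cons j adm by (simp add: a_def)
    also have "\<dots> = cface Q i \<epsilon> (f_letter Q \<tau> (x, j # ds))"
      using 3 Cons.prems j a cface_cdeg_greater by (simp add: a_def)
    finally show ?thesis .
  qed
qed

lemma f_word_face_word:
  assumes tw: "truncating_twisting X Q \<tau>"
    and "list_all (admissible_letter X) w" "1 \<le> i" "i \<le> wdim X w"
  shows "f_word Q \<tau> (face_word X i \<epsilon> w) = cface Q i \<epsilon> (f_word Q \<tau> w)"
  using assms(2-)
proof (induction w arbitrary: i)
  case (Cons l w)
  obtain x ds where l: "l = (x, ds)" by fastforce
  have adm: "admissible_letter X l" "list_all (admissible_letter X) w"
    using Cons.prems(1) by simp_all
  note closed = f_letter_closed[OF adm(1)] f_word_closed[OF adm(2)]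
  show ?case
  proof (cases "i \<le> ldim X l")
    case True
    have "f_word Q \<tau> (face_word X i \<epsilon> (l # w)) =
        cmult Q (f_word Q \<tau> (face_letter X i \<epsilon> x ds)) (f_word Q \<tau> w)"
      using True Cons.prems l adm face_letter_admissible[of x ds i]
      by (simp add: f_word_append admissible_word_def)
    also have "\<dots> = cmult Q (cface Q i \<epsilon> (f_letter Q \<tau> l)) (f_word Q \<tau> w)"
      using True Cons.prems l adm by (simp add: f_word_face_letter[OF tw])
    also have "\<dots> = cface Q i \<epsilon> (f_word Q \<tau> (l # w))"
      using True Cons.prems closed adm by (simp add: cface_cmult_left f_word_Cons)
    finally show ?thesis .
  next
    case False
    have "f_word Q \<tau> (face_word X i \<epsilon> (l # w)) =
        cmult Q (f_letter Q \<tau> l) (cface Q (i - ldim X l) \<epsilon> (f_word Q \<tau> w))"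
      using False Cons adm by (simp add: f_word_Cons)
    also have "\<dots> = cface Q i \<epsilon> (f_word Q \<tau> (l # w))"
      using cface_cmult_right[of "f_letter Q \<tau> l" "f_word Q \<tau> w" "i - ldim X l" \<epsilon>]
        False Cons.prems closed adm by (simp add: f_word_Cons)
    finally show ?thesis .
  qed
qed simp

lemma f_word_omega_unit:
  assumes "one_reduced X" "truncating_twisting X Q \<tau>"
  shows "f_word Q \<tau> (omega_unit X) = cunit Q"
  using assms sdeg_closed[of "base_pt X" 0] base_pt_closed
  by (simp add: omega_unit_def truncating_twisting_def)

lemma f_word_omega_unit_append:
  assumes "one_reduced X" "truncating_twisting X Q \<tau>" "list_all (admissible_letter X) w"
  shows "f_word Q \<tau> (omega_unit X @ w) = f_word Q \<tau> w"
    and "f_word Q \<tau> (w @ omega_unit X) = f_word Q \<tau> w"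
  using omega_unit_admissible[OF assms(1)] f_word_omega_unit[OF assms(1,2)] f_word_closed[OF assms(3)]
  by (simp_all add: admissible_word_def f_word_append assms(3) cmult_unit_left cmult_unit_right)

lemma f_word_shift_degeneracy:
  assumes "x \<in> sc X" "1 \<le> sdim X x" "y \<in> sc X" "1 \<le> sdim X y"
  shows "f_word Q \<tau> [(x, [sdim X x]), (y, [])] = f_word Q \<tau> [(x, []), (y, [1])]"
proof -
  have "f_word Q \<tau> [(x, [sdim X x]), (y, [])] = cdeg Q (sdim X x) (cmult Q (\<tau> x) (\<tau> y))"
    using assms tau_closed cdim_tau by (simp add: cdeg_cmult_left)
  also have "\<dots> = f_word Q \<tau> [(x, []), (y, [1])]"
    using assms tau_closed cdim_tau cdeg_cmult_right[of "\<tau> x" "\<tau> y" 1] by simp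
  finally show ?thesis .
qed

lemma wdim_eq_if_f_word_eq:
  assumes "list_all (admissible_letter X) w" "list_all (admissible_letter X) v"
    and "f_word Q \<tau> w = f_word Q \<tau> v"
  shows "wdim X w = wdim X v"
  using assms f_word_closed by metis

lemma f_word_respects_omega_rel:
  assumes one_reduced: "one_reduced X" and tw: "truncating_twisting X Q \<tau>"
  shows "omega_rel X w v \<Longrightarrow>
    admissible_word X w \<and> admissible_word X v \<and> f_word Q \<tau> w = f_word Q \<tau> v"
proof (induction rule: omega_rel.induct)
  case (om_refl w)
  then show ?case by (simp add: valid_word_imp_admissible)
next
  case (om_shift x y)
  then show ?case
    using f_word_shift_degeneracy
    by (simp add: admissible_word_def admissible_letter_def)
next
  case (om_unit_l w)
  then have "admissible_word X w"
    by (rule valid_word_imp_admissible)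
  then show ?case
    using omega_unit_admissible[OF one_reduced] f_word_omega_unit_append[OF one_reduced tw]
    by (simp add: admissible_word_def)
next
  case (om_unit_r w)
  then have "admissible_word X w"
    by (rule valid_word_imp_admissible)
  then show ?case
    using omega_unit_admissible[OF one_reduced] f_word_omega_unit_append[OF one_reduced tw]
    by (simp add: admissible_word_def)
next
  case (om_top_deg x)
  then show ?case
    using tw sdeg_closed[of x "sdim X x"]
    by (simp add: admissible_word_def admissible_letter_def truncating_twisting_def)
next
  case (om_mult w v u u')
  then have "list_all (admissible_letter X) u" "list_all (admissible_letter X) u'"
    by (simp_all add: list_all_iff valid_letter_imp_admissible)
  with om_mult show ?case
    by (auto simp: admissible_word_def f_word_append)
next
  case (om_face w v i \<epsilon>)
  then have "i \<le> wdim X v"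
    using wdim_eq_if_f_word_eq[of w v] by (simp add: admissible_word_def)
  with om_face show ?case
    using face_word_admissible[of w i \<epsilon>] face_word_admissible[of v i \<epsilon>]
      f_word_face_word[OF tw, of w i \<epsilon>] f_word_face_word[OF tw, of v i \<epsilon>]
    by (simp add: admissible_word_def)
next
  case (om_deg w v j)
  then have "j \<le> Suc (wdim X v)"
    using wdim_eq_if_f_word_eq[of w v] by (simp add: admissible_word_def)
  with om_deg show ?case
    by (simp add: eta_word_admissible f_word_eta_word)
qed auto

lemma omega_map_is_cubical_if_truncating_twisting:
  assumes "one_reduced X" "truncating_twisting X Q \<tau>"
  shows "omega_map_is_cubical X Q \<tau>"
  unfolding omega_map_is_cubical_def
proof (intro conjI allI impI)
  show "f_word Q \<tau> w = f_word Q \<tau> v" if "omega_rel X w v" for w v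
    using f_word_respects_omega_rel[OF assms that] by simp
  show "f_word Q \<tau> (omega_unit X) = cunit Q"
    using f_word_omega_unit[OF assms] .
next
  fix w i \<epsilon>
  assume "valid_word X w" "1 \<le> i \<and> i \<le> wdim X w"
  then show "f_word Q \<tau> (face_word X i \<epsilon> w) = cface Q i \<epsilon> (f_word Q \<tau> w)"
    using f_word_face_word[OF assms(2), of w i \<epsilon>] valid_word_imp_admissible[of X w]
    by (simp add: admissible_word_def)
next
  fix w j
  assume "valid_word X w" "1 \<le> j \<and> j \<le> Suc (wdim X w)"
  then show "f_word Q \<tau> (eta_word X j w) = cdeg Q j (f_word Q \<tau> w)"
    using f_word_eta_word[of w j] valid_word_imp_admissible[of X w] by simp
qed

lemma truncating_twisting_if_omega_map_is_cubical:
  assumes one_reduced: "one_reduced X" and cubical_map: "omega_map_is_cubical X Q \<tau>"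
  shows "truncating_twisting X Q \<tau>"
proof -
  have rel: "f_word Q \<tau> w = f_word Q \<tau> v" if "omega_rel X w v" for w v
    using cubical_map that unfolding omega_map_is_cubical_def by blast
  have face_word: "f_word Q \<tau> (face_word X i \<epsilon> w) = cface Q i \<epsilon> (f_word Q \<tau> w)"
    if "valid_word X w" "1 \<le> i" "i \<le> wdim X w" for w i \<epsilon>
    using cubical_map that unfolding omega_map_is_cubical_def by blast
  have eta_word: "f_word Q \<tau> (eta_word X j w) = cdeg Q j (f_word Q \<tau> w)"
    if "valid_word X w" "1 \<le> j" "j \<le> Suc (wdim X w)" for w j
    using cubical_map that unfolding omega_map_is_cubical_def by blast
  have valid: "valid_word X [(x, [])]" if "x \<in> sc X" "1 \<le> sdim X x" for x
    using that by (simp add: valid_word_def valid_letter_def normal_degs.nd_nil)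
  have face: "f_word Q \<tau> (face_letter X i \<epsilon> x []) = cface Q i \<epsilon> (\<tau> x)"
    if "x \<in> sc X" "1 \<le> i" "i \<le> sdim X x - 1" for x i \<epsilon>
    using face_word[OF valid[of x], of i \<epsilon>] that by (simp add: ldim_def)
  have deg: "cdeg Q (sdim X x) (\<tau> x) = \<tau> (sdeg X (sdim X x) x)"
    if "x \<in> sc X" "1 \<le> sdim X x" for x
  proof -
    have "cdeg Q (sdim X x) (\<tau> x) = f_word Q \<tau> [(x, [sdim X x])]"
      using eta_word[OF valid[OF that], of "sdim X x"] that by (simp add: ldim_def)
    also have "\<dots> = f_word Q \<tau> [(sdeg X (sdim X x) x, [])]"
      using rel[OF omega_rel.om_top_deg[OF that]] .
    finally show ?thesis by simp
  qed
  have unit: "\<tau> x = cunit Q" if "x \<in> sc X" "sdim X x = 1" for x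
    using cubical_map one_simplex_eq_sdeg_base_pt[OF one_reduced that]
    unfolding omega_map_is_cubical_def by (simp add: omega_unit_def)
  show ?thesis
    unfolding truncating_twisting_def
    using unit deg face[where \<epsilon> = False] face[where \<epsilon> = True] by simp
qed

end

theorem mainTheorem1:
  fixes X :: "'x sset" and Q :: "'q mcset" and \<tau> :: "'x \<Rightarrow> 'q"
  assumes "simplicial_set X" and "one_reduced X"
    and "monoidal_cubical_set Q"
    and "\<forall>x\<in>sc X. 1 \<le> sdim X x \<longrightarrow> \<tau> x \<in> cc Q \<and> cdim Q (\<tau> x) = sdim X x - 1"
  shows "truncating_twisting X Q \<tau> \<longleftrightarrow> omega_map_is_cubical X Q \<tau>"
proof -
  interpret twisting_data X Q \<tau>
    using assms by unfold_locales auto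
  show ?thesis
    using assms(2) omega_map_is_cubical_if_truncating_twisting
      truncating_twisting_if_omega_map_is_cubical by blast
qed

end
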